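(* For every $d\ge1$ the function $g_d\colon[1,\infty)\to[1,\infty)$ satisfies: (i) $g_d$ is uniformly continuous, strictly increasing and convex; (ii) $g_d(1)=1$ and $\lim_{t\to\infty}g_d(t)=\infty$; (iii) $g_d$ is differentiable on $(1,\infty)$ with $g_d'(t)=\frac{\Gamma(\frac d2+1)}{\sqrt{\pi}\,\Gamma(\frac{d+1}{2})}\,\frac1d\,\bigl(1-\frac1{t^2}\bigr)^{(d-1)/2}$ for $t>1$; (iv) $g_d(t)-1=\mathcal O\bigl((t-1)^{(d+1)/2}\bigr)$ as $t\to1^+$; (v) $g_d$ has an inverse $g_d^{-1}\colon[1,\infty)\to[1,\infty)$ whose minimal modulus of continuity $w(h)=\sup_{s,t\ge1,\,|s-t|<h}|g_d^{-1}(s)-g_d^{-1}(t)|$ equals $g_d^{-1}(1+h)-1$ for all $h\ge0$; (vi) $w(h)=\mathcal O\bigl(h^{2/(d+1)}\bigr)$ as $h\to0^+$; (vii) $g_d^{-1}(t)=\mathcal O(t)$ as $t\to\infty$.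
   Context: For $d\ge1$ and $t\ge1$ define \[g_d(t)=1+\frac{\Gamma(\frac d2+1)}{\sqrt{\pi}\,\Gamma(\frac{d+1}{2})}\left(\frac{t}{d}\Bigl(1-\frac1{t^2}\Bigr)^{\frac{d+1}{2}}-\int_0^{\arccos(1/t)}\sin^d(s)\,\mathrm{d}s\right).\] Equivalently, for any ellipsoid $E=\{x\colon (x-\mu)^\top\Sigma^{-1}(x-\mu)\le1\}$ with $\Sigma$ symmetric positive definite, and $x\notin E$, $g_d(d_\Sigma(x,\mu))=\mathrm{vol}_d(\mathrm{conv}(E\cup\{x\}))/\mathrm{vol}_d(E)$, where $d_\Sigma(x,\mu)=\sqrt{(x-\mu)^\top\Sigma^{-1}(x-\mu)}$. *)

theory Defs
  imports "HOL-Analysis.Analysis" "HOL-Library.Landau_Symbols"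
begin

definition gconst :: "nat \<Rightarrow> real" where
  "gconst d = Gamma (real d / 2 + 1) / (sqrt pi * Gamma ((real d + 1) / 2))"

definition g :: "nat \<Rightarrow> real \<Rightarrow> real" where
  "g d t = 1 + gconst d *
     (t / real d * (1 - 1 / t\<^sup>2) powr ((real d + 1) / 2)
      - integral {0..arccos (1 / t)} (\<lambda>s. sin s ^ d))"

definition g_inv :: "nat \<Rightarrow> real \<Rightarrow> real" where
  "g_inv d = the_inv_into {1..} (g d)"

(* minimal modulus of continuity of f on A; sup of the empty set (h \<le> 0) is taken to be 0 *)
definition modulus_of_continuity :: "(real \<Rightarrow> real) \<Rightarrow> real set \<Rightarrow> real \<Rightarrow> real" where
  "modulus_of_continuity f A h =
     Sup ({\<bar>f s - f t\<bar> | s t. s \<in> A \<and> t \<in> A \<and> \<bar>s - t\<bar> < h} \<union> {0})"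

end

theory Submission
  imports Defs
begin

text \<open>
  On \<open>(1,\<infinity>)\<close> the derivative \<open>g' t = c\<^sub>d / d * (1 - 1/t\<^sup>2) powr ((d-1)/2)\<close> is positive,
  nondecreasing and bounded by \<open>c\<^sub>d / d\<close>, so \<open>g\<close> is strictly increasing, convex and Lipschitz.
  Convexity gives tangent-line bounds: they force \<open>g t \<rightarrow> \<infinity>\<close>, and near \<open>t = 1\<close>, where
  \<open>g' t\<close> is of order \<open>(t-1) powr ((d-1)/2)\<close>, they pin \<open>g t - 1\<close> between constant multiples
  of \<open>(t-1) powr ((d+1)/2)\<close>.

  The inverse of an increasing convex bijection of \<open>[1,\<infinity>)\<close> is increasing and concave.
  For such a function the increment over an interval of length \<open>h\<close> is largest at the left
  endpoint, so its modulus of continuity is \<open>g_inv (1 + h) - 1\<close>; and a concave function grows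
  at most linearly.
\<close>

lemma convex_on_closure:
  fixes f :: "'a::real_normed_vector \<Rightarrow> real"
  assumes f: "convex_on S f" and cont: "continuous_on (closure S) f"
  shows "convex_on (closure S) f"
proof (rule convex_onI)
  show "convex (closure S)"
    using f by (simp add: convex_on_imp_convex)
  fix t :: real and x y assume t: "0 < t" "t < 1" and xy: "x \<in> closure S" "y \<in> closure S"
  obtain u v :: "nat \<Rightarrow> 'a" where uv: "\<And>n. u n \<in> S" "u \<longlonglongrightarrow> x" "\<And>n. v n \<in> S" "v \<longlonglongrightarrow> y"
    using xy unfolding closure_sequential by blast
  have lim: "(\<lambda>n. f (u n)) \<longlonglongrightarrow> f x" "(\<lambda>n. f (v n)) \<longlonglongrightarrow> f y"
    using uv xy cont unfolding continuous_on_closure_sequentially[of S f] comp_def by auto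
  define w where "w n = (1 - t) *\<^sub>R u n + t *\<^sub>R v n" for n
  have "w n \<in> S" for n
    using uv t f by (auto simp: w_def convex_on_imp_convex intro!: convexD)
  moreover have "w \<longlonglongrightarrow> (1 - t) *\<^sub>R x + t *\<^sub>R y"
    unfolding w_def by (intro tendsto_intros uv)
  moreover have "(1 - t) *\<^sub>R x + t *\<^sub>R y \<in> closure S"
    using \<open>convex (closure S)\<close> xy t by (intro convexD) auto
  ultimately have "(\<lambda>n. f (w n)) \<longlonglongrightarrow> f ((1 - t) *\<^sub>R x + t *\<^sub>R y)"
    using cont unfolding continuous_on_closure_sequentially[of S f] comp_def by auto
  moreover have "(\<lambda>n. (1 - t) * f (u n) + t * f (v n)) \<longlonglongrightarrow> (1 - t) * f x + t * f y"
    by (intro tendsto_intros lim)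
  moreover have "f (w n) \<le> (1 - t) * f (u n) + t * f (v n)" for n
    unfolding w_def using uv t by (intro convex_onD[OF f]) auto
  ultimately show "f ((1 - t) *\<^sub>R x + t *\<^sub>R y) \<le> (1 - t) * f x + t * f y"
    by (intro LIMSEQ_le) auto
qed

lemma concave_on_increments_antimono:
  fixes \<phi> :: "real \<Rightarrow> real"
  assumes conc: "concave_on A \<phi>" and "p \<in> A" "q + L \<in> A" "p \<le> q" "0 \<le> L"
  shows "\<phi> (q + L) - \<phi> q \<le> \<phi> (p + L) - \<phi> p"
proof (cases "L = 0")
  case False
  define s where "s = L / (q + L - p)"
  have D: "0 < q + L - p" using assms False by linarith
  have s: "0 \<le> s" "s \<le> 1" using D assms by (auto simp: s_def divide_le_eq)
  have sD: "s * (q + L - p) = L" using D by (simp add: s_def)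
  have "(1 - s) * p + s * (q + L) = p + s * (q + L - p)"
       "(1 - (1 - s)) * p + (1 - s) * (q + L) = q + L - s * (q + L - p)"
    by (simp_all add: algebra_simps)
  then have eq: "(1 - s) * p + s * (q + L) = p + L" "(1 - (1 - s)) * p + (1 - s) * (q + L) = q"
    by (simp_all add: sD)
  have "(1 - s) * \<phi> p + s * \<phi> (q + L) \<le> \<phi> ((1 - s) * p + s * (q + L))"
    "(1 - (1 - s)) * \<phi> p + (1 - s) * \<phi> (q + L) \<le> \<phi> ((1 - (1 - s)) * p + (1 - s) * (q + L))"
    using concave_onD[OF conc, of s p "q + L"] concave_onD[OF conc, of "1 - s" p "q + L"] s assms by auto
  then have "(1 - s) * \<phi> p + s * \<phi> (q + L) \<le> \<phi> (p + L)"
    "(1 - (1 - s)) * \<phi> p + (1 - s) * \<phi> (q + L) \<le> \<phi> q"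
    unfolding eq .
  then show ?thesis by (simp add: algebra_simps)
qed simp

lemma mono_on_the_inv_into:
  fixes f :: "'a::linorder \<Rightarrow> 'b::linorder"
  assumes "strict_mono_on A f"
  shows "mono_on (f ` A) (the_inv_into A f)"
proof (rule mono_onI)
  fix x y assume "x \<in> f ` A" "y \<in> f ` A" "x \<le> y"
  then obtain u v where "u \<in> A" "v \<in> A" "x = f u" "y = f v" "f u \<le> f v" by blast
  moreover have "inj_on f A" using assms by (rule strict_mono_on_imp_inj_on)
  ultimately show "the_inv_into A f x \<le> the_inv_into A f y"
    using assms by (simp add: the_inv_into_f_f) (metis not_le strict_mono_onD)
qed

lemma concave_on_the_inv_into:
  fixes f :: "real \<Rightarrow> real"
  assumes conv: "convex_on A f" and mono: "strict_mono_on A f" and image: "convex (f ` A)"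
  shows "concave_on (f ` A) (the_inv_into A f)"
proof (rule concave_on_linorderI[OF _ image])
  fix t x y :: real assume t: "0 < t" "t < 1" and xy: "x \<in> f ` A" "y \<in> f ` A"
  then obtain u v where uv: "u \<in> A" "v \<in> A" "x = f u" "y = f v" by blast
  have inj: "inj_on f A" using mono by (rule strict_mono_on_imp_inj_on)
  define w where "w = (1 - t) *\<^sub>R u + t *\<^sub>R v"
  have w: "w \<in> A"
    unfolding w_def by (rule convexD[OF convex_on_imp_convex[OF conv]]) (use uv t in auto)
  have "(1 - t) *\<^sub>R x + t *\<^sub>R y \<in> f ` A"
    by (rule convexD[OF image]) (use xy t in auto)
  moreover have "f w \<le> (1 - t) *\<^sub>R x + t *\<^sub>R y"
    using convex_onD[OF conv, of t u v] uv t by (simp add: w_def)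
  ultimately have "the_inv_into A f (f w) \<le> the_inv_into A f ((1 - t) *\<^sub>R x + t *\<^sub>R y)"
    using w by (intro mono_onD[OF mono_on_the_inv_into[OF mono]]) auto
  then show "(1 - t) * the_inv_into A f x + t * the_inv_into A f y
      \<le> the_inv_into A f ((1 - t) *\<^sub>R x + t *\<^sub>R y)"
    using w uv inj by (simp add: the_inv_into_f_f w_def)
qed

lemma concave_mono_abs_diff_le:
  fixes \<phi> :: "real \<Rightarrow> real"
  assumes mono: "mono_on {a..} \<phi>" and conc: "concave_on {a..} \<phi>" and "a \<le> s" "a \<le> t"
  shows "\<bar>\<phi> s - \<phi> t\<bar> \<le> \<phi> (a + \<bar>s - t\<bar>) - \<phi> a"
proof -
  have *: "\<bar>\<phi> v - \<phi> u\<bar> \<le> \<phi> (a + (v - u)) - \<phi> a" if "a \<le> u" "u \<le> v" for u v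
  proof -
    have "\<phi> u \<le> \<phi> v"
      using that by (intro mono_onD[OF mono]) auto
    moreover have "\<phi> (u + (v - u)) - \<phi> u \<le> \<phi> (a + (v - u)) - \<phi> a"
      using that by (intro concave_on_increments_antimono[OF conc]) auto
    ultimately show ?thesis by simp
  qed
  show ?thesis
    using *[of s t] *[of t s] assms by (cases "s \<le> t") (auto simp: abs_minus_commute)
qed

lemma isCont_concave_on_atLeast:
  fixes \<phi> :: "real \<Rightarrow> real"
  assumes "concave_on {a..} \<phi>" "a < x"
  shows "isCont \<phi> x"
proof -
  have "continuous_on {a<..} (\<lambda>x. - \<phi> x)"
    using assms(1) unfolding concave_on_def
    by (intro convex_on_continuous) (auto intro: convex_on_subset)
  then have "continuous_on {a<..} \<phi>"
    using continuous_on_minus by fastforce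
  then show ?thesis
    using assms(2) by (simp add: continuous_on_eq_continuous_at)
qed

lemma modulus_of_continuity_concave_mono:
  fixes \<phi> :: "real \<Rightarrow> real"
  assumes mono: "mono_on {a..} \<phi>" and conc: "concave_on {a..} \<phi>" and "0 \<le> h"
  shows "modulus_of_continuity \<phi> {a..} h = \<phi> (a + h) - \<phi> a"
proof -
  define D where "D = {\<bar>\<phi> s - \<phi> t\<bar> | s t. s \<in> {a..} \<and> t \<in> {a..} \<and> \<bar>s - t\<bar> < h}"
  have bound: "x \<le> \<phi> (a + h) - \<phi> a" if "x \<in> D \<union> {0}" for x
  proof -
    have "\<bar>\<phi> s - \<phi> t\<bar> \<le> \<phi> (a + h) - \<phi> a" if "a \<le> s" "a \<le> t" "\<bar>s - t\<bar> < h" for s t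
      using concave_mono_abs_diff_le[OF mono conc that(1,2)] mono_onD[OF mono, of "a + \<bar>s - t\<bar>" "a + h"]
        that \<open>0 \<le> h\<close>
      by simp
    then show ?thesis
      using that mono_onD[OF mono, of a "a + h"] \<open>0 \<le> h\<close> by (auto simp: D_def)
  qed
  then have bdd: "bdd_above (D \<union> {0})"
    by (rule bdd_aboveI)
  have "\<phi> (a + h) - \<phi> a \<le> Sup (D \<union> {0})"
  proof (cases "h = 0")
    case True
    then show ?thesis using bdd by (simp add: cSup_upper)
  next
    case False
    then have h: "0 < h" using \<open>0 \<le> h\<close> by simp
    \<comment> \<open>The supremum is only approached, by the pairs \<open>(x, a)\<close> with \<open>x \<rightarrow> a + h\<close> from the left.\<close>
    have "((\<lambda>x. \<phi> x - \<phi> a) \<longlongrightarrow> \<phi> (a + h) - \<phi> a) (at_left (a + h))"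
      using isCont_concave_on_atLeast[OF conc, of "a + h"] h
      unfolding isCont_def filterlim_at_split by (intro tendsto_intros) simp_all
    moreover have "\<forall>\<^sub>F x in at_left (a + h). x \<in> {a<..<a + h}"
      using eventually_at_left_real[of a "a + h"] h by simp
    then have "\<forall>\<^sub>F x in at_left (a + h). \<phi> x - \<phi> a \<le> Sup (D \<union> {0})"
    proof (rule eventually_mono)
      fix x assume "x \<in> {a<..<a + h}"
      then have "\<bar>\<phi> x - \<phi> a\<bar> \<in> D"
        unfolding D_def by (intro CollectI exI[of _ x] exI[of _ a]) auto
      then show "\<phi> x - \<phi> a \<le> Sup (D \<union> {0})"
        using bdd by (intro order.trans[OF abs_ge_self cSup_upper]) auto
    qed
    ultimately show ?thesis
      by (rule tendsto_upperbound) simp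
  qed
  moreover have "Sup (D \<union> {0}) \<le> \<phi> (a + h) - \<phi> a"
    using bound by (intro cSup_least) auto
  ultimately show ?thesis
    unfolding modulus_of_continuity_def D_def[symmetric] by simp
qed

lemma concave_mono_bigo_id:
  fixes \<phi> :: "real \<Rightarrow> real"
  assumes mono: "mono_on {a..} \<phi>" and conc: "concave_on {a..} \<phi>"
  shows "\<phi> \<in> O(\<lambda>t. t)"
proof (rule bigoI)
  define c where "c = \<phi> (a + 1) - \<phi> a"
  have c: "0 \<le> c" using mono_onD[OF mono, of a "a + 1"] by (simp add: c_def)
  have upper: "\<phi> t \<le> \<phi> a + c * (t - a)" if "a + 1 \<le> t" for t
  proof -
    define s where "s = 1 / (t - a)"
    have s: "0 \<le> s" "s \<le> 1" using that by (auto simp: s_def)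
    have "(1 - s) * \<phi> a + s * \<phi> t \<le> \<phi> ((1 - s) * a + s * t)"
      using concave_onD[OF conc, of s a t] s that by auto
    also have "(1 - s) * a + s * t = a + s * (t - a)"
      by (simp add: algebra_simps)
    also have "\<dots> = a + 1"
      using that by (simp add: s_def)
    finally have "s * (\<phi> t - \<phi> a) \<le> c" by (simp add: c_def algebra_simps)
    then show ?thesis using that by (simp add: s_def field_simps)
  qed
  show "\<forall>\<^sub>F t in at_top. norm (\<phi> t) \<le> (\<bar>\<phi> a\<bar> + c * \<bar>a\<bar> + c) * norm t"
    using eventually_ge_at_top[of "max 1 (a + 1)"]
  proof (rule eventually_mono)
    fix t assume t: "max 1 (a + 1) \<le> t"
    have "\<phi> a \<le> \<phi> t" using t by (intro mono_onD[OF mono]) auto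
    moreover have "c * - a \<le> c * \<bar>a\<bar>"
      using c by (intro mult_left_mono) auto
    moreover have "(\<bar>\<phi> a\<bar> + c * \<bar>a\<bar>) * 1 \<le> (\<bar>\<phi> a\<bar> + c * \<bar>a\<bar>) * t"
      using c t by (intro mult_left_mono) auto
    ultimately show "norm (\<phi> t) \<le> (\<bar>\<phi> a\<bar> + c * \<bar>a\<bar> + c) * norm t"
      using upper[of t] t by (auto simp: algebra_simps)
  qed
qed

lemma has_real_derivative_integral_upper:
  fixes f :: "real \<Rightarrow> real"
  assumes "continuous_on {a..b} f" "a < x" "x < b"
  shows "((\<lambda>x. integral {a..x} f) has_real_derivative f x) (at x)"
proof -
  have "at x within {a..b} = at x"
    using assms by (intro at_within_interior) auto
  then show ?thesis
    using integral_has_real_derivative[OF assms(1), of x] assms by simp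
qed

lemma inverse_bounds_of_ge_one:
  fixes t :: real
  assumes "1 \<le> t" shows "-1 < 1 / t" "1 / t \<le> 1"
  using assms by (auto simp: order.strict_trans2[of "-1" 0])

lemma arccos_inverse_bounds:
  assumes "1 \<le> t" shows "0 \<le> arccos (1 / t)" "arccos (1 / t) \<le> pi"
  using arccos_bounded[of "1 / t"] inverse_bounds_of_ge_one[OF assms] by simp_all

lemma arccos_inverse_bounds_strict:
  assumes "1 < t" shows "0 < arccos (1 / t)" "arccos (1 / t) < pi"
  using arccos_lt_bounded[of "1 / t"] inverse_bounds_of_ge_one[of t] assms by simp_all

lemma sin_arccos_inverse: "1 \<le> t \<Longrightarrow> sin (arccos (1 / t)) = sqrt (1 - 1 / t\<^sup>2)"
  using sin_arccos[of "1 / t"] inverse_bounds_of_ge_one[of t] by (simp add: power_divide)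

lemma has_real_derivative_arccos_inverse:
  assumes "1 < t"
  shows "((\<lambda>t. arccos (1 / t)) has_real_derivative 1 / (t\<^sup>2 * sqrt (1 - 1 / t\<^sup>2))) (at t)"
proof -
  have "-1 < 1 / t" "1 / t < 1" using assms inverse_bounds_of_ge_one[of t] by auto
  moreover have "((\<lambda>t. 1 / t) has_real_derivative - 1 / t\<^sup>2) (at t)"
    using assms by (auto intro!: derivative_eq_intros simp: power2_eq_square)
  ultimately have "((\<lambda>t. arccos (1 / t)) has_real_derivative
      inverse (- sqrt (1 - (1 / t)\<^sup>2)) * (- 1 / t\<^sup>2)) (at t)"
    by (rule DERIV_chain2[OF DERIV_arccos])
  then show ?thesis
    by (simp add: power_divide divide_inverse mult.commute power_inverse)
qed

lemma one_minus_inverse_square_pos: "1 < t \<Longrightarrow> 0 < 1 - 1 / (t::real)\<^sup>2"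
  by (simp add: field_simps one_less_power)

lemma one_minus_inverse_square_eq: "t \<noteq> 0 \<Longrightarrow> 1 - 1 / (t::real)\<^sup>2 = (t - 1) * ((t + 1) / t\<^sup>2)"
  by (simp add: field_simps power2_eq_square)

lemma one_minus_inverse_square_le:
  fixes t :: real
  assumes "1 \<le> t" shows "1 - 1 / t\<^sup>2 \<le> 2 * (t - 1)"
proof -
  have "t * 1 \<le> t * t"
    using assms by (intro mult_left_mono) auto
  then have "t + 1 \<le> 2 * t\<^sup>2"
    using assms unfolding power2_eq_square by linarith
  then have "(t + 1) / t\<^sup>2 \<le> 2"
    using assms by (simp add: divide_le_eq)
  then show ?thesis
    using assms mult_left_mono[of "(t + 1) / t\<^sup>2" 2 "t - 1"]
    by (simp add: one_minus_inverse_square_eq mult.commute)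
qed

lemma one_minus_inverse_square_ge:
  fixes t :: real
  assumes "1 \<le> t" "t \<le> 3 / 2" shows "t - 1 \<le> 1 - 1 / t\<^sup>2"
proof -
  have "t * t \<le> t * (3 / 2)"
    using assms by (intro mult_left_mono) auto
  then have "t\<^sup>2 \<le> t + 1"
    using assms unfolding power2_eq_square by linarith
  then have "1 \<le> (t + 1) / t\<^sup>2"
    using assms by (simp add: le_divide_eq)
  then show ?thesis
    using assms mult_left_mono[of 1 "(t + 1) / t\<^sup>2" "t - 1"]
    by (simp add: one_minus_inverse_square_eq)
qed

lemma mult_powr_half_pred:
  fixes x :: real
  assumes "0 \<le> x" shows "x * x powr ((real d - 1) / 2) = x powr ((real d + 1) / 2)"
proof -
  have "(real d + 1) / 2 = 1 + (real d - 1) / 2"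
    by (simp add: field_simps)
  then show ?thesis
    using powr_mult_base[OF assms, of "(real d - 1) / 2"] by (simp only:)
qed

lemma sqrt_power_eq_powr:
  assumes "0 < u" shows "sqrt u ^ n = u powr (real n / 2)"
proof -
  have "sqrt u ^ n = (u powr (1 / 2)) powr real n"
    using powr_realpow[of "u powr (1 / 2)" n] assms by (simp add: powr_half_sqrt)
  also have "\<dots> = u powr (real n / 2)"
    by (simp add: powr_powr)
  finally show ?thesis .
qed

definition g' :: "nat \<Rightarrow> real \<Rightarrow> real" where
  "g' d t = gconst d * (1 / real d) * (1 - 1 / t\<^sup>2) powr ((real d - 1) / 2)"

lemma g'_eq: "g' d t = gconst d / real d * (1 - 1 / t\<^sup>2) powr ((real d - 1) / 2)"
  by (simp add: g'_def)

lemma gconst_pos: "0 < gconst d"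
  unfolding gconst_def by (intro divide_pos_pos mult_pos_pos Gamma_real_pos) auto

lemma continuous_on_g: "continuous_on {1..} (g d)"
proof -
  have "continuous_on {0..pi} (\<lambda>x. integral {0..x} (\<lambda>s. sin s ^ d))"
    by (intro indefinite_integral_continuous_1 integrable_continuous_real continuous_intros)
  then have integral: "continuous_on {1..} (\<lambda>t. integral {0..arccos (1 / t)} (\<lambda>s. sin s ^ d))"
    by (rule continuous_on_compose2)
      (auto intro!: continuous_on_arccos' continuous_intros
        simp: arccos_inverse_bounds less_imp_le[OF inverse_bounds_of_ge_one(1)])
  have power: "continuous_on {1..} (\<lambda>t. (1 - 1 / t\<^sup>2) powr ((real d + 1) / 2))"
    by (intro continuous_on_powr' continuous_intros) (auto simp: field_simps)
  have linear: "continuous_on {1..} (\<lambda>t::real. t / real d)"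
    using continuous_on_mult_right[OF continuous_on_id, of "{1..}" "inverse (real d)"]
    by (simp add: divide_inverse)
  show ?thesis
    unfolding g_def
    by (intro continuous_on_add continuous_on_const continuous_on_mult continuous_on_diff
        integral power linear)
qed

lemma has_real_derivative_integral_sin_power_arccos:
  assumes "1 < t"
  shows "((\<lambda>t. integral {0..arccos (1 / t)} (\<lambda>s. sin s ^ d)) has_real_derivative
      sqrt (1 - 1 / t\<^sup>2) ^ d / (t\<^sup>2 * sqrt (1 - 1 / t\<^sup>2))) (at t)"
proof -
  have "((\<lambda>x. integral {0..x} (\<lambda>s. sin s ^ d)) has_real_derivative sin (arccos (1 / t)) ^ d)
      (at (arccos (1 / t)))"
    using arccos_inverse_bounds_strict[OF assms]
    by (intro has_real_derivative_integral_upper[where b = pi] continuous_intros) auto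
  from DERIV_chain2[OF this has_real_derivative_arccos_inverse[OF assms]] show ?thesis
    using assms by (simp add: sin_arccos_inverse)
qed

lemma has_real_derivative_g:
  assumes d: "1 \<le> d" and t: "1 < t"
  shows "(g d has_real_derivative g' d t) (at t)"
proof -
  \<comment> \<open>With \<open>d = n + 1\<close> and \<open>r = sqrt (1 - 1/t\<^sup>2)\<close> all fractional powers become powers of \<open>r\<close>;
    the two terms of the derivative then combine via \<open>r\<^sup>2 + 1/t\<^sup>2 = 1\<close>.\<close>
  obtain n where n: "d = Suc n" using d by (cases d) auto
  define u where "u = 1 - 1 / t\<^sup>2"
  define r where "r = sqrt u"
  have u: "0 < u" using one_minus_inverse_square_pos[OF t] by (simp add: u_def)
  have r: "0 < r" using u by (simp add: r_def)
  have half: "1 + real n / 2 = (real d + 1) / 2" using n by simp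
  have "((\<lambda>t. 1 - 1 / t\<^sup>2) has_real_derivative 2 / t ^ 3) (at t)"
    using t by (auto intro!: derivative_eq_intros simp: field_simps power2_eq_square power3_eq_cube)
  from DERIV_fun_powr[OF this, of "(real d + 1) / 2"]
  have "((\<lambda>t. (1 - 1 / t\<^sup>2) powr ((real d + 1) / 2)) has_real_derivative
      (1 + real n / 2) * r ^ n * (2 / t ^ 3)) (at t)"
    using u by (simp add: n u_def[symmetric] r_def sqrt_power_eq_powr add_divide_distrib)
  from DERIV_mult[OF DERIV_cdivide[OF DERIV_ident, of "real d"] this]
  have first: "((\<lambda>t. t / real d * (1 - 1 / t\<^sup>2) powr ((real d + 1) / 2)) has_real_derivative
      1 / real d * (u * r ^ n) + (1 + real n / 2) * r ^ n * (2 / t ^ 3) * (t / real d)) (at t)"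
    using u by (simp add: n u_def[symmetric] r_def sqrt_power_eq_powr add_divide_distrib powr_add)
  have second: "((\<lambda>t. integral {0..arccos (1 / t)} (\<lambda>s. sin s ^ d)) has_real_derivative
      r ^ d / (t\<^sup>2 * r)) (at t)"
    using has_real_derivative_integral_sin_power_arccos[OF t] by (simp add: u_def r_def)
  have "(g d has_real_derivative gconst d * ((1 / real d * (u * r ^ n)
      + (1 + real n / 2) * r ^ n * (2 / t ^ 3) * (t / real d)) - r ^ d / (t\<^sup>2 * r))) (at t)"
    using DERIV_add[OF DERIV_const DERIV_cmult[OF DERIV_diff[OF first second]], of 1 "gconst d"]
    unfolding g_def[abs_def] by simp
  also have "(1 + real n / 2) * r ^ n * (2 / t ^ 3) * (t / real d) = r ^ n * (real d + 1) / (real d * t\<^sup>2)"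
    using t d unfolding half by (simp add: field_simps power2_eq_square power3_eq_cube)
  also have "r ^ d / (t\<^sup>2 * r) = r ^ n / t\<^sup>2"
    using r by (simp add: n)
  also have "1 / real d * (u * r ^ n) + r ^ n * (real d + 1) / (real d * t\<^sup>2) - r ^ n / t\<^sup>2
      = r ^ n * (u + 1 / t\<^sup>2) / real d"
    using t d by (simp add: field_simps)
  also have "u + 1 / t\<^sup>2 = 1"
    by (simp add: u_def)
  also have "r ^ n = (1 - 1 / t\<^sup>2) powr ((real d - 1) / 2)"
    using u by (simp add: r_def n u_def sqrt_power_eq_powr)
  finally show ?thesis
    by (simp add: g'_def)
qed

lemma g_one: "g d 1 = 1"
  by (simp add: g_def)

context
  fixes d :: nat
  assumes d: "1 \<le> d"
begin

lemma g'_pos: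
  assumes "1 < t" shows "0 < g' d t"
proof -
  have "0 < (1 - 1 / t\<^sup>2) powr ((real d - 1) / 2)"
    using one_minus_inverse_square_pos[OF assms] by (metis powr_gt_zero less_irrefl)
  then show ?thesis
    using d gconst_pos[of d] by (simp add: g'_eq)
qed

lemma g'_mono:
  assumes "1 < s" "s \<le> t" shows "g' d s \<le> g' d t"
proof -
  have "1 / t\<^sup>2 \<le> 1 / s\<^sup>2"
    using assms by (intro divide_left_mono power_mono mult_pos_pos) auto
  then have "(1 - 1 / s\<^sup>2) powr ((real d - 1) / 2) \<le> (1 - 1 / t\<^sup>2) powr ((real d - 1) / 2)"
    using assms d one_minus_inverse_square_pos[of s] by (intro powr_mono2) auto
  then show ?thesis
    using gconst_pos[of d] by (simp add: g'_eq divide_right_mono mult_left_mono)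
qed

lemma g'_le_powr:
  assumes "1 < t" "1 - 1 / t\<^sup>2 \<le> x"
  shows "g' d t \<le> gconst d / real d * x powr ((real d - 1) / 2)"
proof -
  have "(1 - 1 / t\<^sup>2) powr ((real d - 1) / 2) \<le> x powr ((real d - 1) / 2)"
    using assms d one_minus_inverse_square_pos[of t] by (intro powr_mono2) auto
  then show ?thesis
    using gconst_pos[of d] by (simp add: g'_eq divide_right_mono mult_left_mono)
qed

lemma g'_ge_powr:
  assumes "0 \<le> x" "x \<le> 1 - 1 / t\<^sup>2"
  shows "gconst d / real d * x powr ((real d - 1) / 2) \<le> g' d t"
proof -
  have "x powr ((real d - 1) / 2) \<le> (1 - 1 / t\<^sup>2) powr ((real d - 1) / 2)"
    using assms d by (intro powr_mono2) auto
  then show ?thesis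
    using gconst_pos[of d] by (simp add: g'_eq divide_right_mono mult_left_mono)
qed

lemma g'_le: "1 < t \<Longrightarrow> g' d t \<le> gconst d / real d"
  using g'_le_powr[of t 1] by simp

lemma strict_mono_on_g: "strict_mono_on {1..} (g d)"
proof (rule strict_mono_onI)
  fix s t :: real assume s: "s \<in> {1..}" and "s < t"
  show "g d s < g d t"
  proof (rule DERIV_pos_imp_increasing_open[OF \<open>s < t\<close>])
    fix x assume "s < x" "x < t"
    then show "\<exists>y. (g d has_real_derivative y) (at x) \<and> 0 < y"
      using has_real_derivative_g[OF d, of x] g'_pos[of x] s by auto
  next
    show "continuous_on {s..t} (g d)"
      using s by (intro continuous_on_subset[OF continuous_on_g]) auto
  qed
qed

lemma convex_on_g: "convex_on {1..} (g d)"
proof -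
  have "convex_on {1<..} (g d)"
  proof (rule convex_on_realI[where f' = "g' d"])
    show "connected {1::real<..}"
      by (simp add: convex_connected)
  qed (use has_real_derivative_g[OF d] g'_mono in auto)
  then show ?thesis
    using convex_on_closure[of "{1<..}" "g d"] continuous_on_g by simp
qed

lemma lipschitz_on_g: "(gconst d / real d)-lipschitz_on {1..} (g d)"
proof -
  have "(gconst d / real d)-lipschitz_on {1<..} (g d)"
  proof (rule lipschitz_onI)
    fix x y :: real assume "x \<in> {1<..}" "y \<in> {1<..}"
    then have "norm (g d x - g d y) \<le> gconst d / real d * norm (x - y)"
      using has_real_derivative_g[OF d] g'_pos g'_le
      by (intro field_differentiable_bound[OF convex_real_interval(3)])
        (auto intro: has_field_derivative_at_within simp: abs_of_pos)
    then show "dist (g d x) (g d y) \<le> gconst d / real d * dist x y"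
      by (simp add: dist_norm)
  qed (use gconst_pos[of d] in simp)
  then show ?thesis
    using lipschitz_on_closure[of _ "{1<..}" "g d"] continuous_on_g by simp
qed

lemma g_above_tangent:
  assumes "1 < c" "1 \<le> x" shows "g d c + g' d c * (x - c) \<le> g d x"
proof -
  have "(g d has_real_derivative g' d c) (at c within {1..})"
    using has_real_derivative_g[OF d assms(1)] by (rule has_field_derivative_at_within)
  then have "g' d c * (x - c) \<le> g d x - g d c"
    using assms by (intro convex_on_imp_above_tangent[OF convex_on_g]) auto
  then show ?thesis by simp
qed

lemma filterlim_g_at_top: "filterlim (g d) at_top at_top"
proof (rule filterlim_at_top_mono)
  show "filterlim (\<lambda>x. g d 2 + g' d 2 * (x - 2)) at_top at_top"
    using g'_pos[of 2]
    by (intro filterlim_tendsto_add_at_top[OF tendsto_const] filterlim_tendsto_pos_mult_at_top[OF tendsto_const]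
        filterlim_tendsto_add_at_top[OF tendsto_const filterlim_ident, of "-2", simplified]) auto
  show "\<forall>\<^sub>F x in at_top. g d 2 + g' d 2 * (x - 2) \<le> g d x"
    using eventually_ge_at_top[of 1] by eventually_elim (rule g_above_tangent, auto)
qed

lemma g_image: "g d ` {1..} = {1..}"
proof
  show "g d ` {1..} \<subseteq> {1..}"
    using strict_mono_onD[OF strict_mono_on_g, of 1] g_one by (force simp: le_less)
  show "{1..} \<subseteq> g d ` {1..}"
  proof
    fix y :: real assume y: "y \<in> {1..}"
    have "\<forall>\<^sub>F x in at_top. 1 \<le> x \<and> y \<le> g d x"
      using filterlim_g_at_top eventually_ge_at_top[of 1]
      unfolding filterlim_at_top by (auto intro: eventually_conj)
    then obtain T where T: "1 \<le> T" "y \<le> g d T"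
      by (auto simp: eventually_at_top_linorder)
    have "\<exists>x\<ge>1. x \<le> T \<and> g d x = y"
      using y T g_one continuous_on_subset[OF continuous_on_g]
      by (intro IVT') auto
    then show "y \<in> g d ` {1..}" by force
  qed
qed

lemma g_ge_one: "1 \<le> t \<Longrightarrow> 1 \<le> g d t"
  using g_image by blast

lemma g_sub_one_le:
  assumes t: "1 < t"
  shows "g d t - 1 \<le> gconst d / real d * 2 powr ((real d - 1) / 2) * (t - 1) powr ((real d + 1) / 2)"
proof -
  have "g d t + g' d t * (1 - t) \<le> 1"
    using g_above_tangent[OF t, of 1] g_one by simp
  then have "g d t - 1 \<le> (t - 1) * g' d t"
    by (simp add: algebra_simps)
  also have "\<dots> \<le> (t - 1) * (gconst d / real d * (2 * (t - 1)) powr ((real d - 1) / 2))"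
    using t one_minus_inverse_square_le[of t] by (intro mult_left_mono g'_le_powr) auto
  also have "\<dots> = gconst d / real d * 2 powr ((real d - 1) / 2) * ((t - 1) * (t - 1) powr ((real d - 1) / 2))"
    using t by (subst powr_mult) (auto simp: mult_ac)
  also have "(t - 1) * (t - 1) powr ((real d - 1) / 2) = (t - 1) powr ((real d + 1) / 2)"
    using t by (simp add: mult_powr_half_pred)
  finally show ?thesis .
qed

lemma g_sub_one_ge:
  assumes s: "1 < s" "s \<le> 2"
  shows "gconst d / real d * ((s - 1) / 2) powr ((real d + 1) / 2) \<le> g d s - 1"
proof -
  define m where "m = (1 + s) / 2"
  have m: "1 < m" "m \<le> 3 / 2" "s - m = m - 1" "(s - 1) / 2 = m - 1"
    using s by (auto simp: m_def field_simps)
  have "gconst d / real d * ((s - 1) / 2) powr ((real d + 1) / 2)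
      = (m - 1) * (gconst d / real d * (m - 1) powr ((real d - 1) / 2))"
    unfolding m(4) using mult_powr_half_pred[of "m - 1" d] m(1) by (simp add: mult_ac)
  also have "\<dots> \<le> (s - m) * g' d m"
    unfolding m(3) using m one_minus_inverse_square_ge[of m]
    by (intro mult_left_mono g'_ge_powr) auto
  also have "\<dots> \<le> g d s - g d m"
    using g_above_tangent[OF m(1), of s] s by (simp add: algebra_simps)
  also have "\<dots> \<le> g d s - 1"
    using g_ge_one[of m] m by simp
  finally show ?thesis .
qed

lemma g_sub_one_bigo: "(\<lambda>t. g d t - 1) \<in> O[at_right 1](\<lambda>t. (t - 1) powr ((real d + 1) / 2))"
proof (rule bigoI)
  show "\<forall>\<^sub>F t in at_right 1. norm (g d t - 1)
      \<le> gconst d / real d * 2 powr ((real d - 1) / 2) * norm ((t - 1) powr ((real d + 1) / 2))"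
    using eventually_at_right_less
  proof (rule eventually_mono)
    fix t :: real assume "1 < t"
    then show "norm (g d t - 1)
        \<le> gconst d / real d * 2 powr ((real d - 1) / 2) * norm ((t - 1) powr ((real d + 1) / 2))"
      using g_sub_one_le g_ge_one[of t] by simp
  qed
qed

lemma bij_betw_g: "bij_betw (g d) {1..} {1..}"
  using strict_mono_on_imp_inj_on[OF strict_mono_on_g] g_image by (simp add: bij_betw_def)

lemma g_inv_one: "g_inv d 1 = 1"
  unfolding g_inv_def using bij_betw_g g_one by (auto intro: the_inv_into_f_eq simp: bij_betw_def)

lemma g_g_inv: "1 \<le> y \<Longrightarrow> g d (g_inv d y) = y"
  unfolding g_inv_def using bij_betw_g by (simp add: f_the_inv_into_f_bij_betw)

lemma g_inv_ge_one: "1 \<le> y \<Longrightarrow> 1 \<le> g_inv d y"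
  using bij_betw_the_inv_into[OF bij_betw_g] unfolding g_inv_def by (auto dest: bij_betwE)

lemma mono_on_g_inv: "mono_on {1..} (g_inv d)"
  using mono_on_the_inv_into[OF strict_mono_on_g] unfolding g_inv_def g_image .

lemma concave_on_g_inv: "concave_on {1..} (g_inv d)"
  using concave_on_the_inv_into[OF convex_on_g strict_mono_on_g]
  unfolding g_inv_def g_image by simp

lemma modulus_of_continuity_g_inv:
  "0 \<le> h \<Longrightarrow> modulus_of_continuity (g_inv d) {1..} h = g_inv d (1 + h) - 1"
  using modulus_of_continuity_concave_mono[OF mono_on_g_inv concave_on_g_inv] g_inv_one by simp

lemma g_inv_sub_one_le:
  assumes h: "0 < h" "h < g d 2 - 1"
  shows "g_inv d (1 + h) - 1
    \<le> 2 / (gconst d / real d) powr (2 / (real d + 1)) * h powr (2 / (real d + 1))"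
proof -
  define K where "K = gconst d / real d"
  define r where "r = 2 / (real d + 1)"
  define s where "s = g_inv d (1 + h)"
  have K: "0 < K" using d gconst_pos[of d] by (simp add: K_def)
  have r: "0 < r" "(real d + 1) / 2 * r = 1" by (simp_all add: r_def)
  have s: "1 \<le> s" "g d s = 1 + h"
    using h g_inv_ge_one g_g_inv by (auto simp: s_def)
  have "s < 2"
    using s h strict_mono_on_less[OF strict_mono_on_g, of s 2] by simp
  have "s - 1 \<le> 2 / K powr r * h powr r"
  proof (cases "s = 1")
    case False
    then have "K * ((s - 1) / 2) powr ((real d + 1) / 2) \<le> h"
      using g_sub_one_ge[of s] s \<open>s < 2\<close> by (simp add: K_def)
    then have "(((s - 1) / 2) powr ((real d + 1) / 2)) powr r \<le> (h / K) powr r"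
      using K r by (intro powr_mono2) (auto simp: field_simps)
    then have "(s - 1) / 2 \<le> h powr r / K powr r"
      using s K h r by (simp add: powr_powr powr_divide)
    then show ?thesis by (simp add: field_simps)
  qed (use h in simp)
  then show ?thesis by (simp add: s_def K_def r_def)
qed

lemma modulus_of_continuity_g_inv_bigo:
  "modulus_of_continuity (g_inv d) {1..} \<in> O[at_right 0](\<lambda>h. h powr (2 / (real d + 1)))"
proof (rule bigoI)
  have "0 < g d 2 - 1"
    using strict_mono_onD[OF strict_mono_on_g, of 1 2] g_one by simp
  then have "\<forall>\<^sub>F h in at_right 0. h \<in> {0<..<g d 2 - 1}"
    by (rule eventually_at_right_real)
  then show "\<forall>\<^sub>F h in at_right 0. norm (modulus_of_continuity (g_inv d) {1..} h)
      \<le> 2 / (gconst d / real d) powr (2 / (real d + 1)) * norm (h powr (2 / (real d + 1)))"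
  proof (rule eventually_mono)
    fix h :: real assume h: "h \<in> {0<..<g d 2 - 1}"
    then show "norm (modulus_of_continuity (g_inv d) {1..} h)
        \<le> 2 / (gconst d / real d) powr (2 / (real d + 1)) * norm (h powr (2 / (real d + 1)))"
      using modulus_of_continuity_g_inv[of h] g_inv_sub_one_le[of h] g_inv_ge_one[of "1 + h"] by simp
  qed
qed

lemma g_inv_bigo: "g_inv d \<in> O(\<lambda>t. t)"
  by (rule concave_mono_bigo_id[OF mono_on_g_inv concave_on_g_inv])

end

theorem lemma2:
  fixes d :: nat
  assumes "d \<ge> 1"
  shows
    "g d ` {1..} \<subseteq> {1..}
     \<and> uniformly_continuous_on {1..} (g d)
     \<and> strict_mono_on {1..} (g d)
     \<and> convex_on {1..} (g d)
     \<and> g d 1 = 1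
     \<and> filterlim (g d) at_top at_top
     \<and> (\<forall>t>1. (g d has_real_derivative
            gconst d * (1 / real d) * (1 - 1 / t\<^sup>2) powr ((real d - 1) / 2)) (at t))
     \<and> (\<lambda>t. g d t - 1) \<in> O[at_right 1](\<lambda>t. (t - 1) powr ((real d + 1) / 2))
     \<and> bij_betw (g d) {1..} {1..}
     \<and> (\<forall>h\<ge>0. modulus_of_continuity (g_inv d) {1..} h = g_inv d (1 + h) - 1)
     \<and> modulus_of_continuity (g_inv d) {1..} \<in> O[at_right 0](\<lambda>h. h powr (2 / (real d + 1)))
     \<and> g_inv d \<in> O[at_top](\<lambda>t. t)"
  using g_image[OF assms] lipschitz_on_uniformly_continuous[OF lipschitz_on_g[OF assms]]
    strict_mono_on_g[OF assms] convex_on_g[OF assms] g_one filterlim_g_at_top[OF assms]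
    has_real_derivative_g[OF assms] g_sub_one_bigo[OF assms] bij_betw_g[OF assms]
    modulus_of_continuity_g_inv[OF assms] modulus_of_continuity_g_inv_bigo[OF assms]
    g_inv_bigo[OF assms]
  unfolding g'_def by auto

end
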